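(* Let $\{\mathcal S,\mathcal C,\mathcal R,\mathcal K(t)\}$ with $\mathcal S=\{S_1,\dots,S_N\}$ be a weakly reversible non-autonomous mass-action system with bounded kinetics whose network consists of a single linkage class. Then for each $x_0\in\mathbb R^N_{>0}$, the solution $\phi(t,x_0)$ satisfies $\limsup_{t\to\infty}|\phi(t,x_0)|<\infty$; that is, the system has bounded trajectories.
   Context: A chemical reaction network on species $S_1,\dots,S_N$ consists of a finite set $\mathcal C\subset\mathbb Z^N_{\ge0}$ of complexes and a finite set $\mathcal R$ of reactions $y\to y'$ with $y,y'\in\mathcal C$, $y\ne y'$, such that every species has positive coefficient in some complex and every complex appears in some reaction; reactions are enumerated $y_k\to y_k'$. The reaction diagram is the directed graph on $\mathcal C$ with an edge for each reaction; its connected components are the linkage classes; the network is weakly reversible if each linkage class is strongly connected. A non-autonomous mass-action system with bounded kinetics is such a network with functions $\kappa_k:[0,\infty)\to\mathbb R$ and $\eta>0$ such that $\eta<\kappa_k(t)<1/\eta$ for all $t\ge0$, $k$, and dynamics $\dot x(t)=\sum_k\kappa_k(t)x(t)^{y_k}(y_k'-y_k)$, where $x^{y}=\prod_ix_i^{y_i}$ ($0^0=1$). $\phi(t,x_0)$ denotes the solution with initial condition $x_0$. *)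

theory Defs
  imports "HOL-Analysis.Analysis"
begin

text \<open>Species are indexed by a finite type 'n (so N = CARD('n)); concentrations are
  vectors in real^'n; complexes are functions 'n => nat (elements of Z^N_{>=0}).\<close>

type_synonym 'n complex = "'n \<Rightarrow> nat"
type_synonym 'n reaction = "'n complex \<times> 'n complex"

definition cvec :: "'n::finite complex \<Rightarrow> real^'n" where
  "cvec y = (\<chi> i. real (y i))"

text \<open>x^y = prod_i x_i^{y_i}, with 0^0 = 1.\<close>
definition monom :: "real^'n::finite \<Rightarrow> 'n complex \<Rightarrow> real" where
  "monom x y = (\<Prod>i\<in>UNIV. (x$i) ^ (y i))"

definition crn :: "'n::finite complex set \<Rightarrow> 'n reaction set \<Rightarrow> bool" where
  "crn C R \<longleftrightarrow> finite C \<and> finite R \<and> R \<subseteq> C \<times> C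
     \<and> (\<forall>(y, y')\<in>R. y \<noteq> y')
     \<and> (\<forall>i. \<exists>y\<in>C. y i > 0)
     \<and> (\<forall>y\<in>C. \<exists>r\<in>R. y = fst r \<or> y = snd r)"

definition same_linkage_class :: "'n reaction set \<Rightarrow> 'n complex \<Rightarrow> 'n complex \<Rightarrow> bool" where
  "same_linkage_class R y y' \<longleftrightarrow> (y, y') \<in> (R \<union> R\<inverse>)\<^sup>*"

definition weakly_reversible :: "'n complex set \<Rightarrow> 'n reaction set \<Rightarrow> bool" where
  "weakly_reversible C R \<longleftrightarrow>
     (\<forall>y\<in>C. \<forall>y'\<in>C. same_linkage_class R y y' \<longrightarrow> (y, y') \<in> R\<^sup>*)"

definition single_linkage_class :: "'n complex set \<Rightarrow> 'n reaction set \<Rightarrow> bool" where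
  "single_linkage_class C R \<longleftrightarrow> (\<forall>y\<in>C. \<forall>y'\<in>C. same_linkage_class R y y')"

definition bounded_kinetics :: "'n reaction set \<Rightarrow> ('n reaction \<Rightarrow> real \<Rightarrow> real) \<Rightarrow> bool" where
  "bounded_kinetics R \<kappa> \<longleftrightarrow>
     (\<exists>\<eta>>0. \<forall>r\<in>R. \<forall>t\<ge>0. \<eta> < \<kappa> r t \<and> \<kappa> r t < 1 / \<eta>)"

definition mak_rhs :: "'n::finite reaction set \<Rightarrow> ('n reaction \<Rightarrow> real \<Rightarrow> real)
    \<Rightarrow> real \<Rightarrow> real^'n \<Rightarrow> real^'n" where
  "mak_rhs R \<kappa> t x = (\<Sum>r\<in>R. (\<kappa> r t * monom x (fst r)) *\<^sub>R (cvec (snd r) - cvec (fst r)))"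

text \<open>A solution on [0,\<infinity>) with initial value x0, in integral (Caratheodory) form;
  this includes every classical C^1 solution.\<close>
definition is_solution :: "'n::finite reaction set \<Rightarrow> ('n reaction \<Rightarrow> real \<Rightarrow> real)
    \<Rightarrow> real^'n \<Rightarrow> (real \<Rightarrow> real^'n) \<Rightarrow> bool" where
  "is_solution R \<kappa> x0 x \<longleftrightarrow> x 0 = x0 \<and> continuous_on {0..} x \<and>
     (\<forall>t\<ge>0. ((\<lambda>s. mak_rhs R \<kappa> s (x s)) has_integral (x t - x0)) {0..t})"

end

theory Submission
  imports Defs
begin

(* Let V(p) = \<Sum>i. p_i ln p_i - p_i.  Along a solution, formally
   dV/dt = ln x \<bullet> f(t,x) = \<Sum>r. \<kappa>_r(t) e^{a_y} (a_{y'} - a_y)  with  a_y = ln x \<bullet> y,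
   and since \<kappa>_r(t) \<in> (\<eta>, 1/\<eta>) this is at most a rate-independent "dissipation bound".
   If x is large within its stoichiometric compatibility class (which is invariant), a
   Birch-type argument shows that some reaction has a large |a_{y'} - a_y|, so the values
   a_y spread widely.  A pigeonhole argument finds an empty band of a-values below the
   maximum; since the network is weakly reversible with one linkage class, some reaction
   leaves the complexes above the band and drops across it, and its term outweighs all
   others.  So the dissipation bound is negative far out, V cannot grow there, V stays
   bounded, and bounded V means a bounded state. *)

text \<open>Cousin's lemma in monotonicity form: a function that decreases across every
  sufficiently short interval around each point is decreasing on the whole interval.\<close>
lemma local_antimono_imp_antimono:
  fixes h :: "real \<Rightarrow> real"
  assumes ab: "a \<le> b"
    and loc: "\<And>c. c \<in> {a..b} \<Longrightarrow> \<exists>d>0. \<forall>u v. u \<in> {a..b} \<and> v \<in> {a..b} \<and> u \<le> c \<and> c \<le> v \<and> v - u < d \<longrightarrow> h v \<le> h u"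
  shows "h b \<le> h a"
proof -
  obtain d where d: "\<And>c. c \<in> {a..b} \<Longrightarrow> d c > 0 \<and> (\<forall>u v. u \<in> {a..b} \<and> v \<in> {a..b} \<and> u \<le> c \<and> c \<le> v \<and> v - u < d c \<longrightarrow> h v \<le> h u)"
    using loc by metis
  define e where "e c = (if c \<in> {a..b} then d c / 2 else 1)" for c
  have "gauge (\<lambda>c. ball c (e c))"
    by (rule gauge_ball_dependent) (auto simp: e_def d)
  then obtain p where p: "p tagged_division_of {a..b}" "(\<lambda>c. ball c (e c)) fine p"
    using fine_division_exists_real by blast
  have "sum (\<lambda>(x,K). h(Sup K) - h(Inf K)) p = h b - h a"
    by (rule additive_tagged_division_1[OF ab p(1)])
  moreover have "sum (\<lambda>(x,K). h(Sup K) - h(Inf K)) p \<le> 0"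
  proof (rule sum_nonpos, clarify)
    fix c K assume cK: "(c,K) \<in> p"
    have cK': "c \<in> K" "K \<subseteq> {a..b}" using p(1) cK by auto
    obtain u v where "K = cbox u v" using p(1) cK by blast
    hence K: "K = {u..v}" "u \<le> v" using cK'(1) by auto
    have c: "c \<in> {a..b}" "u \<le> c" "c \<le> v" using cK' K by auto
    have "K \<subseteq> ball c (e c)" using p(2) cK unfolding fine_def by auto
    hence "u \<in> ball c (e c)" "v \<in> ball c (e c)" using K by auto
    hence "v - u < d c" using c by (auto simp: e_def dist_real_def)
    moreover have "u \<in> {a..b}" "v \<in> {a..b}" using cK'(2) K by auto
    ultimately have "h v \<le> h u" using d[OF c(1)] c by blast
    thus "h (Sup K) - h (Inf K) \<le> 0" using K by simp
  qed
  ultimately show ?thesis by simp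
qed

lemma compensated_step:
  fixes K \<delta> gu gv :: real
  assumes K: "0 \<le> K" and \<delta>: "0 \<le> \<delta>" and short: "(6 * K + 1) * \<delta> \<le> ln 2"
    and step: "(1 - 3 * K * \<delta>) * gu \<le> gv" and gu: "0 < gu"
  shows "gu \<le> exp ((6 * K + 1) * \<delta>) * gv"
proof -
  define E where "E = exp ((6 * K + 1) * \<delta>)"
  have E_lower: "1 + (6 * K + 1) * \<delta> \<le> E" unfolding E_def by (rule exp_ge_add_one_self)
  have E_upper: "E \<le> 2" unfolding E_def using short
    by (metis exp_le_cancel_iff exp_ln zero_less_numeral)
  have "3 * K * \<delta> * E \<le> 3 * K * \<delta> * 2" using E_upper K \<delta> by (intro mult_left_mono) auto
  hence "1 \<le> E * (1 - 3 * K * \<delta>)" using E_lower \<delta> by (simp add: algebra_simps)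
  hence "1 * gu \<le> E * (1 - 3 * K * \<delta>) * gu" using gu by (intro mult_right_mono) auto
  also have "\<dots> \<le> E * gv" using step unfolding mult.assoc E_def by (intro mult_left_mono) auto
  finally show ?thesis unfolding E_def by simp
qed

lemma short_interval_decay:
  fixes g f :: "real \<Rightarrow> real"
  assumes uv: "u \<le> v" and K: "0 \<le> K" and gu: "0 < g u"
    and short: "(6 * K + 1) * (v - u) \<le> ln 2"
    and incr: "(f has_integral (g v - g u)) {u..v}"
    and rate: "\<And>t. t \<in> {u..v} \<Longrightarrow> - K * g t \<le> f t"
    and comparable: "\<And>t. t \<in> {u..v} \<Longrightarrow> g t \<le> 3 * g u"
  shows "g u \<le> exp ((6 * K + 1) * (v - u)) * g v"
proof -
  have "(v - u) * (- 3 * K * g u) \<le> g v - g u"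
  proof (rule has_integral_le[OF _ incr])
    show "((\<lambda>_. - 3 * K * g u) has_integral (v - u) * (- 3 * K * g u)) {u..v}"
      using has_integral_const_real[of "- 3 * K * g u" u v] uv by simp
    fix t assume t: "t \<in> {u..v}"
    have "K * g t \<le> K * (3 * g u)" using comparable[OF t] K by (rule mult_left_mono)
    thus "- 3 * K * g u \<le> f t" using rate[OF t] by linarith
  qed
  hence "(1 - 3 * K * (v - u)) * g u \<le> g v" by (simp add: algebra_simps)
  thus ?thesis using compensated_step[OF K _ short _ gu] uv by simp
qed

lemma integral_decay_lower_bound:
  fixes g f :: "real \<Rightarrow> real"
  assumes ab: "a \<le> b" and gc: "continuous_on {a..b} g" and gpos: "\<And>t. t \<in> {a..b} \<Longrightarrow> 0 < g t"
    and K: "0 \<le> K"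
    and incr: "\<And>u v. a \<le> u \<Longrightarrow> u \<le> v \<Longrightarrow> v \<le> b \<Longrightarrow> (f has_integral (g v - g u)) {u..v}"
    and rate: "\<And>t. t \<in> {a..b} \<Longrightarrow> - K * g t \<le> f t"
  shows "g a * exp (- (6 * K + 1) * (b - a)) \<le> g b"
proof -
  define L where "L = 6 * K + 1"
  have L: "1 \<le> L" unfolding L_def using K by simp
  define h where "h t = - (exp (L * t) * g t)" for t
  have "h b \<le> h a"
  proof (rule local_antimono_imp_antimono[OF ab])
    fix c assume c: "c \<in> {a..b}"
    obtain d1 where d1: "d1 > 0" "\<And>t. t \<in> {a..b} \<Longrightarrow> dist t c < d1 \<Longrightarrow> dist (g t) (g c) < g c / 2"
      using gc c gpos[OF c] unfolding continuous_on_iff by (metis half_gt_zero)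
    define d where "d = min d1 (ln 2 / L)"
    have d: "d > 0" unfolding d_def using d1 L by simp
    show "\<exists>d>0. \<forall>u v. u \<in> {a..b} \<and> v \<in> {a..b} \<and> u \<le> c \<and> c \<le> v \<and> v - u < d \<longrightarrow> h v \<le> h u"
    proof (intro exI[of _ d] conjI d allI impI, elim conjE)
      fix u v assume u: "u \<in> {a..b}" and v: "v \<in> {a..b}" and uc: "u \<le> c" and cv: "c \<le> v"
        and uv: "v - u < d"
      have near: "g c / 2 < g t \<and> g t < 3 * g c / 2" if "t \<in> {u..v}" for t
      proof -
        have "dist t c \<le> v - u" using that uc cv by (auto simp: dist_real_def)
        hence "dist t c < d1" using uv unfolding d_def by linarith
        moreover have "t \<in> {a..b}" using that u v by auto
        ultimately have "dist (g t) (g c) < g c / 2" using d1(2) by blast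
        thus ?thesis unfolding dist_real_def abs_less_iff by linarith
      qed
      have short: "L * (v - u) \<le> ln 2" using uv L unfolding d_def by (simp add: field_simps)
      have "g u \<le> exp (L * (v - u)) * g v" unfolding L_def
      proof (rule short_interval_decay[of u v K g f])
        show "u \<le> v" "0 \<le> K" "0 < g u" using uc cv K gpos[OF u] by auto
        show "(6 * K + 1) * (v - u) \<le> ln 2" using short unfolding L_def .
        show "(f has_integral g v - g u) {u..v}" using u v uc cv by (intro incr) auto
        fix t assume t: "t \<in> {u..v}"
        show "- K * g t \<le> f t" using t u v by (intro rate) auto
        show "g t \<le> 3 * g u" using near[OF t] near[of u] uc cv by auto
      qed
      hence "exp (L * u) * g u \<le> exp (L * u) * (exp (L * (v - u)) * g v)" by simp
      also have "\<dots> = exp (L * v) * g v" by (simp add: mult.assoc[symmetric] exp_add[symmetric] algebra_simps)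
      finally show "h v \<le> h u" unfolding h_def by simp
    qed
  qed
  hence "exp (L * a) * g a \<le> exp (L * b) * g b" unfolding h_def by simp
  hence "g a \<le> exp (L * (b - a)) * g b"
    by (simp add: right_diff_distrib exp_diff field_simps)
  hence "g a * exp (- L * (b - a)) \<le> exp (L * (b - a)) * g b * exp (- L * (b - a))"
    by (intro mult_right_mono) auto
  also have "\<dots> = g b * (exp (L * (b - a)) * exp (- L * (b - a)))" by (simp only: ac_simps)
  also have "\<dots> = g b" by (simp add: exp_add[symmetric])
  finally show ?thesis unfolding L_def .
qed

lemma sublevel_invariant:
  fixes v :: "real \<Rightarrow> real"
  assumes vc: "continuous_on {0..} v" and v0: "v 0 \<le> L"
    and nonincr: "\<And>s t. 0 \<le> s \<Longrightarrow> s \<le> t \<Longrightarrow> (\<forall>\<tau>\<in>{s..t}. L \<le> v \<tau>) \<Longrightarrow> v t \<le> v s"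
    and t: "0 \<le> t"
  shows "v t \<le> L"
proof (rule ccontr)
  assume "\<not> v t \<le> L"
  hence vt: "L < v t" by simp
  have vct: "continuous_on {0..t} v" using continuous_on_subset[OF vc] by auto
  define A where "A = {\<tau> \<in> {0..t}. v \<tau> \<le> L}"
  have "closed A" unfolding A_def
    by (rule continuous_on_closed_Collect_le) (auto intro: vct continuous_intros)
  moreover have "0 \<in> A" unfolding A_def using t v0 by auto
  moreover have bdd: "bdd_above A" unfolding A_def by (auto intro: bdd_aboveI[of _ t])
  ultimately have sA: "Sup A \<in> A" by (intro closed_contains_Sup) auto
  define s where "s = Sup A"
  have s: "0 \<le> s" "s \<le> t" "v s \<le> L" using sA unfolding A_def s_def by auto
  have st: "s < t" using s(2,3) vt by (cases "s = t") auto
  have above: "L \<le> v \<tau>" if "\<tau> \<in> {s<..t}" for \<tau>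
  proof (rule ccontr)
    assume "\<not> L \<le> v \<tau>"
    hence "\<tau> \<in> A" unfolding A_def using that s by auto
    hence "\<tau> \<le> s" unfolding s_def using bdd by (rule cSup_upper)
    thus False using that by simp
  qed
  have "L \<le> v s"
  proof (rule continuous_ge_on_closure[of "{s<..t}" v s L])
    show "continuous_on (closure {s<..t}) v"
      using st s(1) by (auto intro: continuous_on_subset[OF vc])
  qed (use st above in auto)
  hence "\<forall>\<tau>\<in>{s..t}. L \<le> v \<tau>"
    using above by (metis atLeastAtMost_iff greaterThanAtMost_iff order_less_le)
  hence "v t \<le> v s" using nonincr s(1) st by simp
  thus False using vt s by simp
qed

definition log_vec :: "real^'n::finite \<Rightarrow> real^'n" where
  "log_vec x = (\<chi> i. ln (x$i))"

definition reaction_vec :: "'n::finite reaction \<Rightarrow> real^'n" where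
  "reaction_vec r = cvec (snd r) - cvec (fst r)"

lemma inner_mak_rhs:
  "q \<bullet> mak_rhs R \<kappa> t p = (\<Sum>r\<in>R. \<kappa> r t * monom p (fst r) * (q \<bullet> reaction_vec r))"
  unfolding mak_rhs_def reaction_vec_def by (simp add: inner_sum_right)

lemma has_integral_inner_const:
  assumes "(f has_integral y) S"
  shows "((\<lambda>s. q \<bullet> f s) has_integral (q \<bullet> y)) S"
  using has_integral_linear[OF assms bounded_linear_inner_right[of q]] by (simp add: o_def)

lemma solution_increment:
  assumes sol: "is_solution R \<kappa> x0 x" and uv: "0 \<le> u" "u \<le> v"
  shows "((\<lambda>s. mak_rhs R \<kappa> s (x s)) has_integral (x v - x u)) {u..v}"
proof -
  let ?f = "\<lambda>s. mak_rhs R \<kappa> s (x s)"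
  have iv: "(?f has_integral (x v - x0)) {0..v}" and iu: "(?f has_integral (x u - x0)) {0..u}"
    using sol uv unfolding is_solution_def by auto
  have intv: "?f integrable_on {0..v}" using iv by blast
  have intuv: "?f integrable_on {u..v}" using integrable_subinterval_real[OF intv] uv by auto
  have "integral {0..v} ?f = integral {0..u} ?f + integral {u..v} ?f"
    using Henstock_Kurzweil_Integration.integral_combine[OF uv(1) uv(2) intv] by simp
  moreover have "integral {0..v} ?f = x v - x0" "integral {0..u} ?f = x u - x0"
    using iv iu by (auto intro: integral_unique)
  ultimately have "integral {u..v} ?f = x v - x u" by (simp add: algebra_simps)
  thus ?thesis using intuv by (metis has_integral_integral)
qed

lemma solution_conservation:
  assumes sol: "is_solution R \<kappa> x0 x" and t: "0 \<le> t" and z: "\<forall>r\<in>R. z \<bullet> reaction_vec r = 0"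
  shows "z \<bullet> (x t - x0) = 0"
proof -
  have "((\<lambda>s. z \<bullet> mak_rhs R \<kappa> s (x s)) has_integral (z \<bullet> (x t - x 0))) {0..t}"
    by (rule has_integral_inner_const[OF solution_increment[OF sol order_refl t]])
  moreover have "(\<lambda>s. z \<bullet> mak_rhs R \<kappa> s (x s)) = (\<lambda>s. 0)"
    using z by (simp add: inner_mak_rhs)
  ultimately have "z \<bullet> (x t - x 0) = 0" using has_integral_0 has_integral_unique by fastforce
  thus ?thesis using sol unfolding is_solution_def by simp
qed

lemma monom_nonneg: "(\<forall>j. 0 \<le> p$j) \<Longrightarrow> 0 \<le> monom p y"
  unfolding monom_def by (intro prod_nonneg) auto

lemma continuous_on_monom: "continuous_on S x \<Longrightarrow> continuous_on S (\<lambda>t. monom (x t) y)"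
  unfolding monom_def by (intro continuous_intros)

lemma monom_split:
  assumes "1 \<le> y i"
  shows "monom p y = p$i * monom p (y(i := y i - 1))"
proof -
  have rem: "monom p y' = p$i ^ (y' i) * (\<Prod>j\<in>UNIV - {i}. p$j ^ y' j)" for y'
    unfolding monom_def by (rule prod.remove) auto
  have "(\<Prod>j\<in>UNIV - {i}. p$j ^ ((y(i := y i - 1)) j)) = (\<Prod>j\<in>UNIV - {i}. p$j ^ y j)"
    by (intro prod.cong) auto
  moreover have "p$i ^ y i = p$i * p$i ^ (y i - 1)" using assms
    by (metis Suc_diff_le diff_Suc_1 power_Suc)
  ultimately show ?thesis using rem[of y] rem[of "y(i := y i - 1)"] by simp
qed

text \<open>Mass-action kinetics can only consume species \<open>i\<close> at a rate proportional to \<open>x_i\<close>: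
  every reaction that decreases \<open>x_i\<close> has \<open>x_i\<close> in its reactant monomial.\<close>
lemma mak_rhs_component_lower_bound:
  assumes eta: "0 < \<eta>" and kb: "\<And>r. r \<in> R \<Longrightarrow> \<eta> < \<kappa> r t \<and> \<kappa> r t < 1 / \<eta>"
    and p: "\<forall>j. 0 \<le> p$j" and Q: "0 \<le> Q" "\<And>r. r \<in> R \<Longrightarrow> monom p ((fst r)(i := fst r i - 1)) \<le> Q"
  shows "- (\<Sum>r\<in>R. Q / \<eta> * real (fst r i)) * p$i \<le> axis i 1 \<bullet> mak_rhs R \<kappa> t p"
proof -
  have "- (Q / \<eta> * real (fst r i) * p$i) \<le> \<kappa> r t * monom p (fst r) * (real (snd r i) - real (fst r i))"
    if r: "r \<in> R" for r
  proof (cases "fst r i \<le> snd r i")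
    case True
    have "0 \<le> \<kappa> r t * monom p (fst r) * (real (snd r i) - real (fst r i))"
      using kb[OF r] eta True monom_nonneg[OF p] by (auto intro!: mult_nonneg_nonneg)
    moreover have "0 \<le> Q / \<eta> * real (fst r i) * p$i" using eta Q(1) p by auto
    ultimately show ?thesis by linarith
  next
    case False
    define m where "m = monom p ((fst r)(i := fst r i - 1))"
    have split: "monom p (fst r) = p$i * m"
      unfolding m_def using False by (intro monom_split) auto
    have m: "0 \<le> m" "m \<le> Q" unfolding m_def using monom_nonneg[OF p] Q(2)[OF r] by auto
    have "\<kappa> r t * (m * (real (fst r i) - real (snd r i))) \<le> (1 / \<eta>) * (Q * real (fst r i))"
      using kb[OF r] m False eta by (intro mult_mono) (auto intro!: mult_nonneg_nonneg)
    hence "\<kappa> r t * (m * (real (fst r i) - real (snd r i))) * p$i \<le> (1 / \<eta>) * (Q * real (fst r i)) * p$i"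
      using p by (intro mult_right_mono) auto
    thus ?thesis unfolding split by (simp add: algebra_simps)
  qed
  hence "(\<Sum>r\<in>R. - (Q / \<eta> * real (fst r i) * p$i))
      \<le> (\<Sum>r\<in>R. \<kappa> r t * monom p (fst r) * (real (snd r i) - real (fst r i)))"
    by (rule sum_mono)
  thus ?thesis
    by (simp add: inner_mak_rhs reaction_vec_def inner_axis' cvec_def sum_negf sum_distrib_right)
qed

lemma first_nonpositive_time:
  fixes x :: "real \<Rightarrow> real^'n::finite"
  assumes xc: "continuous_on {0..t1} x" and t1: "0 \<le> t1" "x t1 $ i1 \<le> 0"
  shows "\<exists>ts\<in>{0..t1}. (\<exists>i. x ts $ i \<le> 0) \<and> (\<forall>\<tau>\<in>{0..<ts}. \<forall>j. 0 < x \<tau> $ j)"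
proof -
  define Z where "Z = {\<tau>\<in>{0..t1}. \<exists>i. x \<tau> $ i \<le> 0}"
  have Z_eq: "Z = (\<Union>i. {\<tau>\<in>{0..t1}. (\<lambda>\<tau>. x \<tau> $ i) \<tau> \<le> (\<lambda>_. 0) \<tau>})"
    unfolding Z_def by auto
  have "closed Z" unfolding Z_eq
    by (intro closed_Union finite_imageI finite ballI, clarify, rule continuous_on_closed_Collect_le)
       (auto intro!: continuous_intros xc)
  moreover have "t1 \<in> Z" using t1 unfolding Z_def by auto
  moreover have bdd: "bdd_below Z" unfolding Z_def by (auto intro: bdd_belowI[of _ 0])
  ultimately have "Inf Z \<in> Z" by (intro closed_contains_Inf) auto
  moreover have "0 < x \<tau> $ j" if "\<tau> \<in> {0..<Inf Z}" for \<tau> j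
  proof (rule ccontr)
    assume "\<not> 0 < x \<tau> $ j"
    hence "\<tau> \<in> Z" using that \<open>Inf Z \<in> Z\<close> unfolding Z_def by (auto simp: not_less)
    hence "Inf Z \<le> \<tau>" using bdd by (rule cInf_lower)
    thus False using that by simp
  qed
  ultimately show ?thesis unfolding Z_def by blast
qed

lemma monomials_bounded_on_interval:
  fixes x :: "real \<Rightarrow> real^'n::finite"
  assumes finY: "finite Y" and xc: "continuous_on {a..b} x"
  shows "\<exists>Q\<ge>0. \<forall>\<tau>\<in>{a..b}. \<forall>y\<in>Y. monom (x \<tau>) y \<le> Q"
proof -
  define G where "G \<tau> = (\<Sum>y\<in>Y. \<bar>monom (x \<tau>) y\<bar>)" for \<tau>
  have "compact (G ` {a..b})" unfolding G_def
    by (intro compact_continuous_image continuous_intros continuous_on_monom xc compact_Icc)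
  then obtain Q where Q: "\<And>\<tau>. \<tau> \<in> {a..b} \<Longrightarrow> \<bar>G \<tau>\<bar> \<le> Q"
    by (metis bounded_iff compact_imp_bounded image_eqI real_norm_def)
  have "monom (x \<tau>) y \<le> max Q 0" if "\<tau> \<in> {a..b}" "y \<in> Y" for \<tau> y
  proof -
    have "\<bar>monom (x \<tau>) y\<bar> \<le> G \<tau>" unfolding G_def using finY that(2) by (intro member_le_sum) auto
    thus ?thesis using Q[OF that(1)] by linarith
  qed
  thus ?thesis by (intro exI[of _ "max Q 0"]) auto
qed

lemma solution_component_lower_bound:
  assumes sol: "is_solution R \<kappa> x0 x" and eta: "0 < \<eta>"
    and kb: "\<And>r t. r \<in> R \<Longrightarrow> 0 \<le> t \<Longrightarrow> \<eta> < \<kappa> r t \<and> \<kappa> r t < 1 / \<eta>"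
    and T: "0 \<le> T" and pos: "\<And>\<tau> j. \<tau> \<in> {0..T} \<Longrightarrow> 0 < x \<tau> $ j"
    and Q: "0 \<le> Q" "\<And>\<tau> r. \<tau> \<in> {0..T} \<Longrightarrow> r \<in> R \<Longrightarrow> monom (x \<tau>) ((fst r)(i := fst r i - 1)) \<le> Q"
  shows "x0 $ i * exp (- (6 * (\<Sum>r\<in>R. Q / \<eta> * real (fst r i)) + 1) * T) \<le> x T $ i"
proof -
  define K where "K = (\<Sum>r\<in>R. Q / \<eta> * real (fst r i))"
  have K0: "0 \<le> K" unfolding K_def using eta Q(1) by (intro sum_nonneg) auto
  have "x 0 $ i * exp (- (6 * K + 1) * (T - 0)) \<le> x T $ i"
  proof (rule integral_decay_lower_bound[OF T _ pos K0])
    show "continuous_on {0..T} (\<lambda>\<tau>. x \<tau> $ i)"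
      using sol unfolding is_solution_def by (auto intro!: continuous_intros intro: continuous_on_subset)
    fix u v assume "0 \<le> u" "u \<le> v" "v \<le> T"
    thus "((\<lambda>\<tau>. axis i 1 \<bullet> mak_rhs R \<kappa> \<tau> (x \<tau>)) has_integral (x v $ i - x u $ i)) {u..v}"
      using has_integral_inner_const[OF solution_increment[OF sol], of u v "axis i 1"]
      by (simp add: inner_axis')
  next
    fix \<tau> assume tau: "\<tau> \<in> {0..T}"
    have "\<forall>j. 0 \<le> x \<tau> $ j" using pos[OF tau] by (simp add: less_imp_le)
    moreover have "\<And>r. r \<in> R \<Longrightarrow> monom (x \<tau>) ((fst r)(i := fst r i - 1)) \<le> Q"
      using Q(2) tau by auto
    moreover have "\<And>r. r \<in> R \<Longrightarrow> \<eta> < \<kappa> r \<tau> \<and> \<kappa> r \<tau> < 1 / \<eta>" using kb tau by auto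
    ultimately show "- K * x \<tau> $ i \<le> axis i 1 \<bullet> mak_rhs R \<kappa> \<tau> (x \<tau>)"
      unfolding K_def using mak_rhs_component_lower_bound[OF eta _ _ Q(1)] by blast
  qed
  thus ?thesis using sol unfolding K_def is_solution_def by simp
qed

text \<open>Up to the first
  time \<open>ts\<close> at which some \<open>x_i\<close> vanishes, \<open>x_i\<close> is bounded below by a positive
  exponential; by continuity this bound persists at \<open>ts\<close>, a contradiction.\<close>
lemma solution_positive:
  fixes R :: "'n::finite reaction set"
  assumes sol: "is_solution R \<kappa> x0 x" and finR: "finite R"
    and eta: "0 < \<eta>" and kb: "\<And>r t. r \<in> R \<Longrightarrow> 0 \<le> t \<Longrightarrow> \<eta> < \<kappa> r t \<and> \<kappa> r t < 1 / \<eta>"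
    and x0: "\<forall>i. 0 < x0$i" and t: "0 \<le> t"
  shows "0 < x t $ i"
proof (rule ccontr)
  assume "\<not> 0 < x t $ i"
  have xc: "continuous_on {0..b} x" for b
    using sol unfolding is_solution_def by (auto intro: continuous_on_subset)
  obtain ts i where ts: "ts \<in> {0..t}" "x ts $ i \<le> 0" and before: "\<And>\<tau> j. \<tau> \<in> {0..<ts} \<Longrightarrow> 0 < x \<tau> $ j"
    using first_nonpositive_time[OF xc t] \<open>\<not> 0 < x t $ i\<close> by (metis not_less)
  have tspos: "0 < ts"
  proof (rule ccontr)
    assume "\<not> 0 < ts"
    hence "ts = 0" using ts(1) by simp
    thus False using ts(2) x0 sol unfolding is_solution_def by (metis not_less)
  qed
  obtain Q where Q: "0 \<le> Q"
      "\<forall>\<tau>\<in>{0..ts}. \<forall>y\<in>(\<lambda>r. (fst r)(i := fst r i - 1)) ` R. monom (x \<tau>) y \<le> Q"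
    using monomials_bounded_on_interval[OF finite_imageI[OF finR] xc[of ts]] by blast
  define E where "E = (\<Sum>r\<in>R. Q / \<eta> * real (fst r i))"
  have E: "0 \<le> E" unfolding E_def using eta Q(1) by (intro sum_nonneg) auto
  define c0 where "c0 = x0 $ i * exp (- (6 * E + 1) * ts)"
  have lower: "c0 \<le> x T $ i" if T: "T \<in> {0..<ts}" for T
  proof -
    have Q': "monom (x \<tau>) ((fst r)(i := fst r i - 1)) \<le> Q" if "\<tau> \<in> {0..T}" "r \<in> R" for \<tau> r
      using Q(2) that T by auto
    have "- (6 * E + 1) * ts \<le> - (6 * E + 1) * T" using T E by (simp add: mult_left_mono)
    hence "c0 \<le> x0 $ i * exp (- (6 * E + 1) * T)" unfolding c0_def using x0 by simp
    also have "\<dots> \<le> x T $ i" unfolding E_def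
      using T before by (intro solution_component_lower_bound[OF sol eta kb _ _ Q(1) Q']) auto
    finally show ?thesis .
  qed
  have "c0 \<le> x ts $ i"
  proof (rule continuous_ge_on_closure[of "{0..<ts}" "\<lambda>\<tau>. x \<tau> $ i"])
    show "continuous_on (closure {0..<ts}) (\<lambda>\<tau>. x \<tau> $ i)"
      using tspos by (auto intro!: continuous_intros xc)
  qed (use tspos lower in auto)
  moreover have "0 < c0" unfolding c0_def using x0 by simp
  ultimately show False using ts by simp
qed

definition lyapunov :: "real^'n::finite \<Rightarrow> real" where
  "lyapunov p = (\<Sum>i\<in>UNIV. p$i * ln (p$i) - p$i)"

text \<open>Convexity of \<open>V\<close> in secant form; its gradient is \<open>ln p\<close>.\<close>
lemma lyapunov_secant:
  assumes p: "\<forall>i. 0 < p$i" and q: "\<forall>i. 0 < q$i"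
  shows "lyapunov q - lyapunov p \<le> log_vec q \<bullet> (q - p)"
proof -
  have "q$i * ln (q$i) - q$i - (p$i * ln (p$i) - p$i) \<le> ln (q$i) * (q$i - p$i)" for i
  proof -
    have pi: "0 < p$i" and qi: "0 < q$i" using p q by auto
    have "ln (q$i / p$i) \<le> q$i / p$i - 1" using pi qi by (intro ln_le_minus_one) auto
    hence "p$i * ln (q$i / p$i) \<le> p$i * (q$i / p$i - 1)" using pi by (intro mult_left_mono) auto
    moreover have "p$i * (q$i / p$i - 1) = q$i - p$i" using pi by (simp add: field_simps)
    moreover have "ln (q$i / p$i) = ln (q$i) - ln (p$i)" using pi qi by (simp add: ln_div)
    ultimately show ?thesis by (simp add: algebra_simps)
  qed
  hence "lyapunov q - lyapunov p \<le> (\<Sum>i\<in>UNIV. ln (q$i) * (q$i - p$i))"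
    unfolding lyapunov_def sum_subtractf[symmetric] by (intro sum_mono) auto
  thus ?thesis by (simp add: inner_vec_def log_vec_def)
qed

lemma lyapunov_upper:
  fixes p :: "real^'n::finite"
  assumes p: "\<forall>i. 0 < p$i" and nb: "norm p \<le> B"
  shows "lyapunov p \<le> real CARD('n) * B^2"
proof -
  have "p$i * ln (p$i) - p$i \<le> B^2" for i
  proof -
    have pi: "0 < p$i" using p by auto
    have "ln (p$i) \<le> p$i - 1" using pi by (rule ln_le_minus_one)
    hence "p$i * ln (p$i) \<le> p$i * (p$i - 1)" using pi by (intro mult_left_mono) auto
    moreover have "p$i \<le> B" using component_le_norm_cart[of p i] nb pi by auto
    hence "p$i * p$i \<le> B * B" using pi by (intro mult_mono) auto
    ultimately show ?thesis using pi by (simp add: algebra_simps power2_eq_square)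
  qed
  hence "lyapunov p \<le> (\<Sum>i\<in>(UNIV::'n set). B^2)" unfolding lyapunov_def by (intro sum_mono) auto
  thus ?thesis by simp
qed

lemma entropy_term_lower: "0 < t \<Longrightarrow> -1 \<le> t * ln t - t" for t :: real
proof -
  assume t: "0 < t"
  have "ln (1/t) \<le> 1/t - 1" using t by (intro ln_le_minus_one) auto
  hence "t * (- ln t) \<le> t * (1/t - 1)" using t by (intro mult_left_mono) (auto simp: ln_div)
  thus ?thesis using t by (simp add: algebra_simps)
qed

lemma norm_le_lyapunov:
  fixes p :: "real^'n::finite"
  assumes p: "\<forall>i. 0 < p$i"
  shows "norm p \<le> real CARD('n) * max (exp 2) (lyapunov p + real CARD('n))"
proof -
  have comp: "p$i \<le> max (exp 2) (lyapunov p + real CARD('n))" for i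
  proof (cases "exp 2 \<le> p$i")
    case False thus ?thesis by simp
  next
    case True
    have pi: "0 < p$i" using p by auto
    have "2 \<le> ln (p$i)" using True pi by (metis ln_exp ln_le_cancel_iff exp_gt_zero)
    hence "p$i * 2 \<le> p$i * ln (p$i)" using pi by (intro mult_left_mono) auto
    moreover have "lyapunov p = (p$i * ln (p$i) - p$i) + (\<Sum>j\<in>UNIV - {i}. p$j * ln (p$j) - p$j)"
      unfolding lyapunov_def by (rule sum.remove) auto
    moreover have "(\<Sum>j\<in>UNIV - {i}. (-1::real)) \<le> (\<Sum>j\<in>UNIV - {i}. p$j * ln (p$j) - p$j)"
      using p entropy_term_lower by (intro sum_mono) auto
    moreover have "- real CARD('n) \<le> (\<Sum>j\<in>(UNIV::'n set) - {i}. (-1::real))"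
      by (simp add: card_Diff_subset)
    ultimately have "p$i - real CARD('n) \<le> lyapunov p" by linarith
    thus ?thesis by simp
  qed
  have "norm p \<le> (\<Sum>i\<in>UNIV. \<bar>p$i\<bar>)" by (rule norm_le_l1_cart)
  also have "\<dots> \<le> (\<Sum>i\<in>(UNIV::'n set). max (exp 2) (lyapunov p + real CARD('n)))"
    using comp p by (intro sum_mono) (simp add: less_imp_le)
  finally show ?thesis by simp
qed

text \<open>On the span of a finite set \<open>W\<close>, the seminorm \<open>\<Sum>w\<in>W. \<bar>v \<bullet> w\<bar>\<close> is a norm, hence
  equivalent to the Euclidean norm.\<close>
lemma span_norm_equiv:
  fixes W :: "'a::euclidean_space set"
  assumes fin: "finite W"
  shows "\<exists>m>0. \<forall>v\<in>span W. m * norm v \<le> (\<Sum>w\<in>W. \<bar>v \<bullet> w\<bar>)"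
proof (cases "span W \<inter> sphere 0 1 = {}")
  case True
  have "v = 0" if "v \<in> span W" for v
  proof (rule ccontr)
    assume "v \<noteq> 0"
    hence "v /\<^sub>R norm v \<in> span W \<inter> sphere 0 1" using that by (simp add: span_mul)
    thus False using True by blast
  qed
  hence "\<forall>v\<in>span W. 1 * norm v \<le> (\<Sum>w\<in>W. \<bar>v \<bullet> w\<bar>)" by (metis norm_zero mult_1 sum_nonneg abs_ge_zero)
  thus ?thesis by (intro exI[of _ 1]) auto
next
  case False
  define \<psi> where "\<psi> v = (\<Sum>w\<in>W. \<bar>v \<bullet> w\<bar>)" for v
  have cont: "continuous_on (span W \<inter> sphere 0 1) \<psi>" unfolding \<psi>_def
    by (intro continuous_intros)
  obtain v0 where v0: "v0 \<in> span W \<inter> sphere 0 1" "\<And>y. y \<in> span W \<inter> sphere 0 1 \<Longrightarrow> \<psi> v0 \<le> \<psi> y"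
    using continuous_attains_inf[OF closed_Int_compact[OF closed_span compact_sphere] False cont]
    by blast
  have pos: "0 < \<psi> v0"
  proof (rule ccontr)
    assume "\<not> 0 < \<psi> v0"
    moreover have "0 \<le> \<psi> v0" unfolding \<psi>_def by (intro sum_nonneg) auto
    ultimately have "\<psi> v0 = 0" by linarith
    hence "\<forall>w\<in>W. v0 \<bullet> w = 0" unfolding \<psi>_def using fin by (subst (asm) sum_nonneg_eq_0_iff) auto
    hence "orthogonal v0 v0" using orthogonal_to_span[of v0 W v0] v0(1) by (auto simp: orthogonal_def)
    thus False using v0(1) by (auto simp: orthogonal_def)
  qed
  show ?thesis
  proof (intro exI[of _ "\<psi> v0"] conjI pos ballI)
    fix v assume v: "v \<in> span W"
    show "\<psi> v0 * norm v \<le> (\<Sum>w\<in>W. \<bar>v \<bullet> w\<bar>)"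
    proof (cases "v = 0")
      case False
      have "v /\<^sub>R norm v \<in> span W \<inter> sphere 0 1" using v False by (simp add: span_mul)
      hence "\<psi> v0 \<le> \<psi> (v /\<^sub>R norm v)" by (rule v0(2))
      also have "\<psi> (v /\<^sub>R norm v) = \<psi> v / norm v" unfolding \<psi>_def
        by (simp add: sum_divide_distrib abs_mult divide_inverse mult.commute sum_distrib_left)
      finally show ?thesis using False by (simp add: \<psi>_def field_simps)
    qed simp
  qed
qed

lemma log_increment_coercive:
  fixes x x0 K :: real
  assumes x: "0 < x" and x0: "0 < x0" and K: "0 \<le> K"
  shows "K * \<bar>x - x0\<bar> - K * (x0 * exp K) \<le> (ln x - ln x0) * (x - x0)"
proof -
  have mono: "0 \<le> (ln x - ln x0) * (x - x0)"
    using x x0 by (cases "x \<le> x0") (auto intro: mult_nonpos_nonpos mult_nonneg_nonneg)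
  have e1: "x0 \<le> x0 * exp K" using x0 K by simp
  show ?thesis
  proof (cases "x0 * exp K \<le> x")
    case True
    have "ln (x0 * exp K) \<le> ln x" using True x0 x by (subst ln_le_cancel_iff) auto
    hence "K \<le> ln x - ln x0" using x0 by (simp add: ln_mult)
    hence "K * (x - x0) \<le> (ln x - ln x0) * (x - x0)" using True e1 by (intro mult_right_mono) auto
    moreover have "0 \<le> K * (x0 * exp K)" using K x0 by simp
    ultimately show ?thesis using True e1 by simp
  next
    case False
    hence "\<bar>x - x0\<bar> \<le> x0 * exp K" using x e1 x0 by linarith
    hence "K * \<bar>x - x0\<bar> \<le> K * (x0 * exp K)" using K by (rule mult_left_mono)
    thus ?thesis using mono by linarith
  qed
qed

text \<open>Within the compatibility class of \<open>x0\<close> (the affine space through \<open>x0\<close> orthogonal to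
  \<open>W\<^sup>\<bottom>\<close>), the monotone quantity \<open>(ln x - ln x0) \<bullet> (x - x0)\<close> grows at most linearly in
  \<open>\<bar>x - x0\<bar>\<close> as long as \<open>ln x\<close> has bounded inner products with all of \<open>W\<close>: the component
  of \<open>ln x\<close> in \<open>span W\<close> is then bounded, and the other component is orthogonal to \<open>x - x0\<close>.\<close>
lemma compatibility_class_log_inner_bound:
  fixes W :: "(real^'n::finite) set" and x0 :: "real^'n"
  assumes fin: "finite W"
  shows "\<exists>C1\<ge>0. \<forall>x. (\<forall>z. (\<forall>w\<in>W. z \<bullet> w = 0) \<longrightarrow> z \<bullet> (x - x0) = 0)
          \<longrightarrow> (\<forall>w\<in>W. \<bar>log_vec x \<bullet> w\<bar> \<le> D)
          \<longrightarrow> (log_vec x - log_vec x0) \<bullet> (x - x0) \<le> C1 * norm (x - x0)"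
proof -
  obtain m where m: "0 < m" "\<And>v. v \<in> span W \<Longrightarrow> m * norm v \<le> (\<Sum>w\<in>W. \<bar>v \<bullet> w\<bar>)"
    using span_norm_equiv[OF fin] by blast
  define C1 where "C1 = real (card W) * \<bar>D\<bar> / m + norm (log_vec x0)"
  show ?thesis
  proof (intro exI[of _ C1] conjI allI impI)
    show "0 \<le> C1" unfolding C1_def using m by auto
    fix x :: "real^'n"
    assume cl: "\<forall>z. (\<forall>w\<in>W. z \<bullet> w = 0) \<longrightarrow> z \<bullet> (x - x0) = 0"
      and lb: "\<forall>w\<in>W. \<bar>log_vec x \<bullet> w\<bar> \<le> D"
    obtain p q where pq: "p \<in> span W" "\<And>w. w \<in> span W \<Longrightarrow> orthogonal q w" "log_vec x = p + q"
      using orthogonal_subspace_decomp_exists[of W "log_vec x"] by metis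
    have qw: "q \<bullet> w = 0" if "w \<in> W" for w
      using pq(2)[of w] that span_base by (auto simp: orthogonal_def)
    have "m * norm p \<le> (\<Sum>w\<in>W. \<bar>p \<bullet> w\<bar>)" by (rule m(2)[OF pq(1)])
    also have "\<dots> \<le> (\<Sum>w\<in>W. \<bar>D\<bar>)"
      using lb qw pq(3) by (intro sum_mono) (force simp: inner_add_left)
    finally have np: "norm p \<le> real (card W) * \<bar>D\<bar> / m" using m(1) by (simp add: field_simps)
    have "q \<bullet> (x - x0) = 0" using cl qw by blast
    hence "(log_vec x - log_vec x0) \<bullet> (x - x0) = p \<bullet> (x - x0) - log_vec x0 \<bullet> (x - x0)"
      using pq(3) by (simp add: inner_add_left inner_diff_left)
    also have "\<dots> \<le> norm p * norm (x - x0) + norm (log_vec x0) * norm (x - x0)"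
      using Cauchy_Schwarz_ineq2[of p "x - x0"] Cauchy_Schwarz_ineq2[of "log_vec x0" "x - x0"] by linarith
    also have "\<dots> \<le> C1 * norm (x - x0)"
      using mult_right_mono[OF np norm_ge_zero[of "x - x0"]] unfolding C1_def by (simp add: distrib_right)
    finally show "(log_vec x - log_vec x0) \<bullet> (x - x0) \<le> C1 * norm (x - x0)" .
  qed
qed

text \<open>The linear
  upper bound above is beaten by the coercive lower bound with \<open>K = C1 + 1\<close>.\<close>
lemma compatibility_class_log_bound:
  fixes W :: "(real^'n::finite) set" and x0 :: "real^'n"
  assumes fin: "finite W" and x0: "\<forall>i. 0 < x0$i"
  shows "\<exists>B. \<forall>x. (\<forall>i. 0 < x$i) \<longrightarrow> (\<forall>z. (\<forall>w\<in>W. z \<bullet> w = 0) \<longrightarrow> z \<bullet> (x - x0) = 0)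
          \<longrightarrow> (\<forall>w\<in>W. \<bar>log_vec x \<bullet> w\<bar> \<le> D) \<longrightarrow> norm x \<le> B"
proof -
  obtain C1 where C1: "0 \<le> C1" and upper: "\<And>x. \<forall>z. (\<forall>w\<in>W. z \<bullet> w = 0) \<longrightarrow> z \<bullet> (x - x0) = 0
      \<Longrightarrow> \<forall>w\<in>W. \<bar>log_vec x \<bullet> w\<bar> \<le> D \<Longrightarrow> (log_vec x - log_vec x0) \<bullet> (x - x0) \<le> C1 * norm (x - x0)"
    using compatibility_class_log_inner_bound[OF fin, of x0 D] by blast
  define K where "K = C1 + 1"
  define Z where "Z = (\<Sum>i\<in>UNIV. x0$i * exp K)"
  show ?thesis
  proof (intro exI[of _ "norm x0 + K * Z"] allI impI)
    fix x :: "real^'n"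
    assume xp: "\<forall>i. 0 < x$i"
      and cl: "\<forall>z. (\<forall>w\<in>W. z \<bullet> w = 0) \<longrightarrow> z \<bullet> (x - x0) = 0"
      and lb: "\<forall>w\<in>W. \<bar>log_vec x \<bullet> w\<bar> \<le> D"
    define d where "d = x - x0"
    have "K * \<bar>d$i\<bar> - K * (x0$i * exp K) \<le> (ln (x$i) - ln (x0$i)) * d$i" for i
      using log_increment_coercive[of "x$i" "x0$i" K] xp x0 C1 unfolding d_def K_def by simp
    hence "(\<Sum>i\<in>UNIV. K * \<bar>d$i\<bar> - K * (x0$i * exp K)) \<le> (\<Sum>i\<in>UNIV. (ln (x$i) - ln (x0$i)) * d$i)"
      by (intro sum_mono)
    also have "\<dots> = (log_vec x - log_vec x0) \<bullet> d" by (simp add: inner_vec_def log_vec_def)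
    also have "\<dots> \<le> C1 * norm d" unfolding d_def by (rule upper[OF cl lb])
    also have "\<dots> \<le> C1 * (\<Sum>i\<in>UNIV. \<bar>d$i\<bar>)" using C1 norm_le_l1_cart by (rule mult_left_mono[rotated])
    finally have "K * (\<Sum>i\<in>UNIV. \<bar>d$i\<bar>) - K * Z \<le> C1 * (\<Sum>i\<in>UNIV. \<bar>d$i\<bar>)"
      by (simp add: sum_subtractf sum_distrib_left Z_def)
    hence l1: "(\<Sum>i\<in>UNIV. \<bar>d$i\<bar>) \<le> K * Z" unfolding K_def by (simp add: algebra_simps)
    have "norm x \<le> norm x0 + norm d" unfolding d_def using norm_triangle_ineq[of x0 "x - x0"] by simp
    also have "\<dots> \<le> norm x0 + K * Z" using norm_le_l1_cart[of d] l1 by simp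
    finally show "norm x \<le> norm x0 + K * Z" .
  qed
qed

text \<open>The largest value of \<open>\<kappa> t\<close> over all rates \<open>\<kappa> \<in> (\<eta>, 1/\<eta>)\<close>.\<close>
definition envelope :: "real \<Rightarrow> real \<Rightarrow> real" where
  "envelope \<eta> t = max (\<eta> * t) (t / \<eta>)"

lemma rate_le_envelope:
  fixes \<eta> k t :: real
  assumes "\<eta> < k" "k < 1 / \<eta>" "0 < \<eta>"
  shows "k * t \<le> envelope \<eta> t"
proof (cases "0 \<le> t")
  case True
  have "k * t \<le> (1 / \<eta>) * t" by (rule mult_right_mono) (use assms True in auto)
  thus ?thesis by (simp add: envelope_def)
next
  case False
  hence "k * t \<le> \<eta> * t" using assms by (intro mult_right_mono_neg) auto
  thus ?thesis by (simp add: envelope_def)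
qed

lemma envelope_neg: "0 < \<eta> \<Longrightarrow> \<eta> < 1 \<Longrightarrow> t < 0 \<Longrightarrow> envelope \<eta> t = \<eta> * t"
  unfolding envelope_def by (smt (verit) mult_le_cancel_right1 mult_less_cancel_left_pos
      nonzero_mult_div_cancel_left times_divide_eq_right)

lemma envelope_le: "0 < \<eta> \<Longrightarrow> \<eta> < 1 \<Longrightarrow> t \<le> c \<Longrightarrow> 0 \<le> c \<Longrightarrow> envelope \<eta> t \<le> c / \<eta>"
  unfolding envelope_def
  by (smt (verit) divide_right_mono mult_le_cancel_right1 mult_nonneg_nonneg
      nonzero_mult_div_cancel_left times_divide_eq_right)

lemma exp_shift_mult_le: "0 \<le> s \<Longrightarrow> exp (M - s) * s \<le> exp M" for s M :: real
proof -
  assume s: "0 \<le> s"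
  have "s \<le> exp s" using exp_ge_add_one_self[of s] by linarith
  hence "exp (M - s) * s \<le> exp (M - s) * exp s" by (intro mult_left_mono) auto
  also have "\<dots> = exp M" by (simp add: exp_add[symmetric])
  finally show ?thesis .
qed

lemma exp_increment_le:
  fixes a1 a2 M :: real
  assumes "a1 \<le> M" "a2 \<le> M"
  shows "exp a1 * (a2 - a1) \<le> exp M"
proof (cases "a2 \<le> a1")
  case True
  hence "exp a1 * (a2 - a1) \<le> 0" by (simp add: mult_nonneg_nonpos)
  thus ?thesis by (meson exp_ge_zero order_trans)
next
  case False
  have "exp a1 * (a2 - a1) \<le> exp a1 * (M - a1)" using assms by (intro mult_left_mono) auto
  also have "\<dots> = exp (M - (M - a1)) * (M - a1)" by simp
  also have "\<dots> \<le> exp M" using assms by (intro exp_shift_mult_le) simp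
  finally show ?thesis .
qed

text \<open>The width of
  band \<open>k\<close> is chosen so that a drop across it from level \<open>M - d\<^sub>k\<close> outweighs all other
  reaction terms (with \<open>A = |R|/\<eta>\<^sup>2\<close>, see the dominance estimate below).\<close>
fun gap_seq :: "real \<Rightarrow> nat \<Rightarrow> real" where
  "gap_seq A 0 = 0"
| "gap_seq A (Suc k) = gap_seq A k + A * exp (gap_seq A k) + 1"

lemma gap_seq_nonneg: "0 \<le> A \<Longrightarrow> 0 \<le> gap_seq A k"
  by (induction k) auto

lemma gap_seq_mono: "0 \<le> A \<Longrightarrow> j \<le> k \<Longrightarrow> gap_seq A j \<le> gap_seq A k"
  by (rule lift_Suc_mono_le[of "gap_seq A"]) auto

text \<open>Pigeonhole: the \<open>card C\<close> values \<open>a y\<close> cannot meet all of the \<open>card C\<close> disjoint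
  bands \<open>[M - d (k+1), M - d k)\<close>; hence one band is empty.\<close>
lemma empty_band_exists:
  fixes a :: "'c \<Rightarrow> real" and d :: "nat \<Rightarrow> real"
  assumes finC: "finite C" and top: "ytop \<in> C" "\<forall>y\<in>C. a y \<le> a ytop"
    and d0: "0 \<le> d 0" and dmono: "\<And>k. d k \<le> d (Suc k)"
  shows "\<exists>k<card C. \<forall>y\<in>C. a ytop - d k \<le> a y \<or> a y < a ytop - d (Suc k)"
proof (rule ccontr)
  assume "\<not> ?thesis"
  hence band: "\<exists>y\<in>C. a ytop - d (Suc k) \<le> a y \<and> a y < a ytop - d k" if "k < card C" for k
    using that by (force simp: not_le)
  define U where "U j = {y\<in>C. a ytop - d j \<le> a y}" for j
  have "j + 1 \<le> card (U j)" if "j \<le> card C" for j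
    using that
  proof (induction j)
    case 0
    have "ytop \<in> U 0" using top d0 unfolding U_def by simp
    thus ?case using finC unfolding U_def by (auto simp: Suc_le_eq card_gt_0_iff)
  next
    case (Suc j)
    obtain y where y: "y \<in> C" "a ytop - d (Suc j) \<le> a y" "a y < a ytop - d j"
      using band[of j] Suc.prems by auto
    have "U j \<subset> U (Suc j)" using y dmono[of j] unfolding U_def by force
    hence "card (U j) < card (U (Suc j))" using finC by (intro psubset_card_mono) (auto simp: U_def)
    thus ?case using Suc by simp
  qed
  moreover have "card (U (card C)) \<le> card C" using finC unfolding U_def by (intro card_mono) auto
  ultimately show False by fastforce
qed

lemma path_leaves_set:
  assumes "(u, v) \<in> R\<^sup>*" "u \<in> T" "v \<notin> T"
  shows "\<exists>r\<in>R. fst r \<in> T \<and> snd r \<notin> T"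
  using assms
proof (induction rule: rtrancl_induct)
  case (step w v)
  thus ?case by (cases "w \<in> T") force+
qed simp

text \<open>The dominance estimate: one strongly negative term beats \<open>card R\<close> terms of size at
  most \<open>e^M\<close>, even after each term is distorted by an unknown rate in \<open>(\<eta>, 1/\<eta>)\<close>.\<close>
lemma envelope_sum_negative:
  fixes g :: "'r \<Rightarrow> real"
  assumes finR: "finite R" and r0: "r0 \<in> R" and eta: "0 < \<eta>" "\<eta> < 1" and d: "0 \<le> d"
    and drop: "g r0 \<le> - exp (M - d) * (real (card R) / \<eta>^2 * exp d + 1)"
    and small: "\<And>r. r \<in> R \<Longrightarrow> g r \<le> exp M"
  shows "(\<Sum>r\<in>R. envelope \<eta> (g r)) < 0"
proof -
  have "0 < exp (M - d) * (real (card R) / \<eta>^2 * exp d + 1)"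
    by (intro mult_pos_pos) (auto intro: add_nonneg_pos)
  hence "g r0 < 0" using drop by linarith
  hence F0: "envelope \<eta> (g r0) = \<eta> * g r0" using eta by (rule envelope_neg[rotated -1])
  have "(\<Sum>r\<in>R. envelope \<eta> (g r)) = envelope \<eta> (g r0) + (\<Sum>r\<in>R - {r0}. envelope \<eta> (g r))"
    using r0 finR by (simp add: sum.remove)
  also have "(\<Sum>r\<in>R - {r0}. envelope \<eta> (g r)) \<le> (\<Sum>r\<in>R - {r0}. exp M / \<eta>)"
    using small eta by (intro sum_mono envelope_le) auto
  also have "\<dots> \<le> real (card R) * (exp M / \<eta>)"
  proof -
    have "real (card (R - {r0})) \<le> real (card R)" using finR by (simp add: card_mono)
    hence "real (card (R - {r0})) * (exp M / \<eta>) \<le> real (card R) * (exp M / \<eta>)"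
      using eta by (intro mult_right_mono) auto
    thus ?thesis by (simp only: sum_constant)
  qed
  finally have sum: "(\<Sum>r\<in>R. envelope \<eta> (g r)) \<le> \<eta> * g r0 + real (card R) * (exp M / \<eta>)"
    using F0 by simp
  have "\<eta> * g r0 \<le> \<eta> * (- exp (M - d) * (real (card R) / \<eta>^2 * exp d + 1))"
    using drop eta by (intro mult_left_mono) auto
  also have "\<dots> = - (real (card R) * (exp M / \<eta>)) - \<eta> * exp (M - d)"
    using eta by (simp add: field_simps power2_eq_square exp_diff)
  finally have "(\<Sum>r\<in>R. envelope \<eta> (g r)) \<le> - \<eta> * exp (M - d)" using sum by simp
  also have "\<dots> < 0" using eta by simp
  finally show ?thesis .
qed

text \<open>Let \<open>a : C \<rightarrow> \<real>\<close> (later \<open>a_y = ln x \<bullet> y\<close>)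
  have a large spread, and let every cut of \<open>C\<close> be crossed by a reaction leaving it.
  Then \<open>\<Sum>r. envelope \<eta> (e^{a_y}(a_{y'} - a_y)) < 0\<close>: choose an empty band below the maximum;
  a reaction leaving the set of complexes above the band drops across the whole band.\<close>
lemma large_spread_negative:
  fixes C :: "'c set" and R :: "('c \<times> 'c) set" and a :: "'c \<Rightarrow> real"
  assumes finC: "finite C" and finR: "finite R" and RC: "R \<subseteq> C \<times> C"
    and eta: "0 < \<eta>" "\<eta> < 1"
    and cut: "\<And>T y1 y2. T \<subseteq> C \<Longrightarrow> y1 \<in> T \<Longrightarrow> y2 \<in> C - T \<Longrightarrow> \<exists>r\<in>R. fst r \<in> T \<and> snd r \<in> C - T"
    and spread: "ylow \<in> C" "ytop \<in> C" "\<forall>y\<in>C. a y \<le> a ytop"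
      "a ylow < a ytop - gap_seq (real (card R) / \<eta>^2) (card C)"
  shows "(\<Sum>r\<in>R. envelope \<eta> (exp (a (fst r)) * (a (snd r) - a (fst r)))) < 0"
proof -
  define A where "A = real (card R) / \<eta>^2"
  define M where "M = a ytop"
  have A0: "0 \<le> A" unfolding A_def by simp
  obtain k where k: "k < card C" "\<And>y. y \<in> C \<Longrightarrow> M - gap_seq A k \<le> a y \<or> a y < M - gap_seq A (Suc k)"
    using empty_band_exists[OF finC spread(2,3), of "gap_seq A"] A0 unfolding M_def by auto
  define T where "T = {y\<in>C. M - gap_seq A k \<le> a y}"
  have "ytop \<in> T" unfolding T_def M_def using spread(2) gap_seq_nonneg[OF A0, of k] by simp
  moreover have "ylow \<in> C - T"
    using spread(1,4) gap_seq_mono[OF A0, of k "card C"] k(1) unfolding T_def M_def A_def by auto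
  ultimately obtain r0 where r0: "r0 \<in> R" "fst r0 \<in> T" "snd r0 \<in> C - T"
    using cut[of T] unfolding T_def by blast
  have a1: "M - gap_seq A k \<le> a (fst r0)" using r0 unfolding T_def by auto
  have a2: "a (snd r0) < M - gap_seq A (Suc k)" using r0 k(2) unfolding T_def by auto
  define X where "X = A * exp (gap_seq A k) + 1"
  have X: "0 \<le> X" unfolding X_def using A0 by simp
  have "exp (a (fst r0)) * (a (snd r0) - a (fst r0)) \<le> exp (a (fst r0)) * (- X)"
    using a1 a2 by (intro mult_left_mono) (auto simp: X_def)
  also have "\<dots> \<le> exp (M - gap_seq A k) * (- X)"
    using a1 X by (intro mult_right_mono_neg) auto
  finally have "exp (a (fst r0)) * (a (snd r0) - a (fst r0)) \<le> - exp (M - gap_seq A k) * X"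
    by simp
  moreover have "exp (a (fst r)) * (a (snd r) - a (fst r)) \<le> exp M" if "r \<in> R" for r
    using RC that spread(3) unfolding M_def by (intro exp_increment_le) auto
  ultimately show ?thesis
    using envelope_sum_negative[OF finR r0(1) eta gap_seq_nonneg[OF A0]] unfolding A_def X_def
    by auto
qed

text \<open>\<open>dissipation_bound \<eta> R p q\<close> bounds \<open>ln q \<bullet> f(t,p)\<close> uniformly over all rates in
  \<open>(\<eta>, 1/\<eta>)\<close>; for \<open>q = p\<close> it bounds the derivative of \<open>V\<close> along solutions.\<close>
definition dissipation_bound :: "real \<Rightarrow> 'n::finite reaction set \<Rightarrow> real^'n \<Rightarrow> real^'n \<Rightarrow> real" where
  "dissipation_bound \<eta> R p q = (\<Sum>r\<in>R. envelope \<eta> (monom p (fst r) * (log_vec q \<bullet> reaction_vec r)))"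

lemma inner_mak_rhs_le_dissipation_bound:
  assumes eta: "0 < \<eta>" and kb: "\<And>r. r \<in> R \<Longrightarrow> \<eta> < \<kappa> r t \<and> \<kappa> r t < 1 / \<eta>"
  shows "log_vec q \<bullet> mak_rhs R \<kappa> t p \<le> dissipation_bound \<eta> R p q"
  unfolding inner_mak_rhs dissipation_bound_def mult.assoc
  using kb eta by (intro sum_mono rate_le_envelope) auto

lemma monom_exp:
  assumes "\<forall>i. 0 < x$i"
  shows "monom x y = exp (log_vec x \<bullet> cvec y)"
proof -
  have "monom x y = (\<Prod>i\<in>UNIV. exp (real (y i) * ln (x$i)))"
    unfolding monom_def using assms by (intro prod.cong) (auto simp: exp_of_nat_mult)
  also have "\<dots> = exp (\<Sum>i\<in>UNIV. real (y i) * ln (x$i))" by (simp add: exp_sum)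
  also have "(\<Sum>i\<in>UNIV. real (y i) * ln (x$i)) = log_vec x \<bullet> cvec y"
    by (simp add: inner_vec_def log_vec_def cvec_def mult.commute)
  finally show ?thesis .
qed

lemma dissipation_bound_negative_near:
  fixes p :: "real^'n::finite"
  assumes p: "\<forall>i. 0 < p$i" and eta: "0 < \<eta>" and neg: "dissipation_bound \<eta> R p p < 0"
  shows "\<exists>e>0. \<forall>q q'. dist q p < e \<longrightarrow> dist q' p < e \<longrightarrow> dissipation_bound \<eta> R q q' < 0"
proof -
  have "(\<lambda>z. dissipation_bound \<eta> R (fst z) (snd z)) = (\<lambda>z. \<Sum>r\<in>R. envelope \<eta>
      ((\<Prod>i\<in>UNIV. (fst z $ i) ^ (fst r i)) * (\<Sum>i\<in>UNIV. ln (snd z $ i) * reaction_vec r $ i)))"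
    by (simp add: dissipation_bound_def monom_def log_vec_def inner_vec_def)
  moreover have "isCont (\<lambda>z. \<Sum>r\<in>R. envelope \<eta>
      ((\<Prod>i\<in>UNIV. (fst z $ i) ^ (fst r i)) * (\<Sum>i\<in>UNIV. ln (snd z $ i) * reaction_vec r $ i))) (p, p)"
    unfolding envelope_def using p eta by (intro continuous_intros) (auto simp: less_imp_neq[symmetric])
  ultimately have "isCont (\<lambda>z. dissipation_bound \<eta> R (fst z) (snd z)) (p, p)" by simp
  then obtain e where e: "0 < e" "\<And>z. dist z (p, p) < e
      \<Longrightarrow> dist (dissipation_bound \<eta> R (fst z) (snd z)) (dissipation_bound \<eta> R p p) < - dissipation_bound \<eta> R p p"
    unfolding continuous_at_eps_delta using neg by (metis fst_conv snd_conv neg_0_less_iff_less)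
  show ?thesis
  proof (intro exI[of _ "e/2"] conjI allI impI)
    fix q q' assume "dist q p < e/2" "dist q' p < e/2"
    hence "dist (q, q') (p, p) < e"
      using sqrt_sum_squares_le_sum_abs[of "dist q p" "dist q' p"] unfolding dist_Pair_Pair by simp
    thus "dissipation_bound \<eta> R q q' < 0" using e(2)[of "(q, q')"] unfolding dist_real_def by simp
  qed (use e in simp)
qed

text \<open>In a weakly reversible network with a single linkage class any two complexes are joined
  by a directed path, so every proper nonempty cut of \<open>C\<close> is left by some reaction.\<close>
lemma reaction_leaves_every_cut:
  assumes crn: "crn C R" and wr: "weakly_reversible C R" and sl: "single_linkage_class C R"
    and T: "T \<subseteq> C" "y1 \<in> T" "y2 \<in> C - T"
  shows "\<exists>r\<in>R. fst r \<in> T \<and> snd r \<in> C - T"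
proof -
  have "(y1, y2) \<in> R\<^sup>*"
    using wr sl T unfolding weakly_reversible_def single_linkage_class_def by blast
  then obtain r where "r \<in> R" "fst r \<in> T" "snd r \<notin> T" using path_leaves_set[of y1 y2 R T] T by blast
  moreover have "R \<subseteq> C \<times> C" using crn unfolding crn_def by simp
  ultimately show ?thesis by (intro bexI[of _ r]) auto
qed

lemma large_difference_imp_spread:
  fixes a :: "'c \<Rightarrow> real"
  assumes finC: "finite C" and y: "y1 \<in> C" "y2 \<in> C" and diff: "D < \<bar>a y2 - a y1\<bar>"
  shows "\<exists>ylow ytop. ylow \<in> C \<and> ytop \<in> C \<and> (\<forall>y\<in>C. a y \<le> a ytop) \<and> a ylow < a ytop - D"
proof -
  have "Max (a ` C) \<in> a ` C" using finC y by (intro Max_in) auto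
  then obtain ytop where ytop: "ytop \<in> C" "a ytop = Max (a ` C)" by auto
  have top: "\<forall>y\<in>C. a y \<le> a ytop" using ytop finC by auto
  show ?thesis
  proof (cases "a y2 \<le> a y1")
    case True
    hence "a y2 < a ytop - D" using diff top y(1) by auto
    thus ?thesis using y(2) ytop(1) top by blast
  next
    case False
    hence "a y1 < a ytop - D" using diff top y(2) by auto
    thus ?thesis using y(1) ytop(1) top by blast
  qed
qed

text \<open>Far out in a compatibility class the dissipation bound is negative: a large \<open>x\<close>
  forces a large difference \<open>\<bar>ln x \<bullet> (y' - y)\<bar>\<close> along some reaction (Birch-type bound),
  hence a large spread of \<open>a_y = ln x \<bullet> y\<close>, and the gap argument applies.\<close>
lemma dissipation_bound_negative_far_out:
  fixes C :: "'n::finite complex set" and R :: "'n reaction set" and x0 :: "real^'n"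
  assumes crn: "crn C R" and wr: "weakly_reversible C R" and sl: "single_linkage_class C R"
    and eta: "0 < \<eta>" "\<eta> < 1" and x0: "\<forall>i. 0 < x0$i"
  shows "\<exists>B. \<forall>x. (\<forall>i. 0 < x$i) \<longrightarrow> (\<forall>z. (\<forall>r\<in>R. z \<bullet> reaction_vec r = 0) \<longrightarrow> z \<bullet> (x - x0) = 0)
          \<longrightarrow> B < norm x \<longrightarrow> dissipation_bound \<eta> R x x < 0"
proof -
  have finC: "finite C" and finR: "finite R" and RC: "R \<subseteq> C \<times> C" using crn unfolding crn_def by auto
  define D where "D = gap_seq (real (card R) / \<eta>^2) (card C)"
  obtain B where B: "\<And>x. (\<forall>i. 0 < x$i) \<Longrightarrow> (\<forall>z. (\<forall>w\<in>reaction_vec ` R. z \<bullet> w = 0) \<longrightarrow> z \<bullet> (x - x0) = 0)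
          \<Longrightarrow> (\<forall>w\<in>reaction_vec ` R. \<bar>log_vec x \<bullet> w\<bar> \<le> D) \<Longrightarrow> norm x \<le> B"
    using compatibility_class_log_bound[OF finite_imageI[OF finR] x0, where D=D] by blast
  show ?thesis
  proof (intro exI[of _ B] allI impI)
    fix x :: "real^'n"
    assume xp: "\<forall>i. 0 < x$i" and cl: "\<forall>z. (\<forall>r\<in>R. z \<bullet> reaction_vec r = 0) \<longrightarrow> z \<bullet> (x - x0) = 0"
      and nb: "B < norm x"
    define a where "a y = log_vec x \<bullet> cvec y" for y
    have "\<not> (\<forall>w\<in>reaction_vec ` R. \<bar>log_vec x \<bullet> w\<bar> \<le> D)"
    proof
      assume bounded: "\<forall>w\<in>reaction_vec ` R. \<bar>log_vec x \<bullet> w\<bar> \<le> D"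
      have "\<forall>z. (\<forall>w\<in>reaction_vec ` R. z \<bullet> w = 0) \<longrightarrow> z \<bullet> (x - x0) = 0" using cl by simp
      hence "norm x \<le> B" using bounded by (rule B[OF xp])
      thus False using nb by simp
    qed
    then obtain r where r: "r \<in> R" "D < \<bar>log_vec x \<bullet> reaction_vec r\<bar>" by (auto simp: not_le)
    have "log_vec x \<bullet> reaction_vec r = a (snd r) - a (fst r)"
      by (simp add: a_def reaction_vec_def inner_diff_right)
    moreover have "fst r \<in> C" "snd r \<in> C" using r(1) RC by auto
    ultimately obtain ylow ytop where spread: "ylow \<in> C" "ytop \<in> C" "\<forall>y\<in>C. a y \<le> a ytop" "a ylow < a ytop - D"
      using large_difference_imp_spread[OF finC, of "fst r" "snd r" D a] r(2) by auto
    have "(\<Sum>r\<in>R. envelope \<eta> (exp (a (fst r)) * (a (snd r) - a (fst r)))) < 0"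
      using large_spread_negative[OF finC finR RC eta _ spread(1-3)]
        reaction_leaves_every_cut[OF crn wr sl] spread(4) unfolding D_def by blast
    moreover have "monom x (fst r) * (log_vec x \<bullet> reaction_vec r) = exp (a (fst r)) * (a (snd r) - a (fst r))" for r
      unfolding monom_exp[OF xp] a_def reaction_vec_def by (simp add: inner_diff_right)
    ultimately show "dissipation_bound \<eta> R x x < 0" unfolding dissipation_bound_def by simp
  qed
qed

lemma lyapunov_continuous_on:
  assumes "continuous_on S x" and "\<And>t i. t \<in> S \<Longrightarrow> 0 < x t $ i"
  shows "continuous_on S (\<lambda>t. lyapunov (x t))"
  unfolding lyapunov_def using assms by (intro continuous_intros) (auto simp: less_imp_neq[symmetric])

text \<open>One step of the Lyapunov argument: by the secant inequality,
  \<open>V(x v) - V(x u) \<le> ln x(v) \<bullet> (x v - x u) = \<integral>\<^sub>u\<^sup>v ln x(v) \<bullet> f(\<tau>, x \<tau>) d\<tau>\<close>, and the integrand is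
  bounded by the dissipation bound at \<open>(x \<tau>, x v)\<close>.\<close>
lemma lyapunov_step_le:
  assumes sol: "is_solution R \<kappa> x0 x" and pos: "\<And>t i. 0 \<le> t \<Longrightarrow> 0 < x t $ i"
    and eta: "0 < \<eta>" and kb: "\<And>r t. r \<in> R \<Longrightarrow> 0 \<le> t \<Longrightarrow> \<eta> < \<kappa> r t \<and> \<kappa> r t < 1 / \<eta>"
    and uv: "0 \<le> u" "u \<le> v" and neg: "\<And>\<tau>. \<tau> \<in> {u..v} \<Longrightarrow> dissipation_bound \<eta> R (x \<tau>) (x v) < 0"
  shows "lyapunov (x v) \<le> lyapunov (x u)"
proof -
  have "log_vec (x v) \<bullet> (x v - x u) \<le> 0"
  proof (rule has_integral_le[OF has_integral_inner_const[OF solution_increment[OF sol uv]] has_integral_0])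
    fix \<tau> assume tau: "\<tau> \<in> {u..v}"
    have "log_vec (x v) \<bullet> mak_rhs R \<kappa> \<tau> (x \<tau>) \<le> dissipation_bound \<eta> R (x \<tau>) (x v)"
      using tau uv by (intro inner_mak_rhs_le_dissipation_bound eta kb) auto
    also have "\<dots> < 0" by (rule neg[OF tau])
    finally show "log_vec (x v) \<bullet> mak_rhs R \<kappa> \<tau> (x \<tau>) \<le> 0" by simp
  qed
  moreover have "lyapunov (x v) - lyapunov (x u) \<le> log_vec (x v) \<bullet> (x v - x u)"
    using pos uv by (intro lyapunov_secant) auto
  ultimately show ?thesis by simp
qed

text \<open>Near each time \<open>c\<close> the dissipation bound stays negative for all pairs of
  nearby states, so the previous step applies on short intervals around \<open>c\<close>; Cousin's
  lemma makes the decrease global.\<close>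
lemma lyapunov_nonincreasing:
  assumes sol: "is_solution R \<kappa> x0 x" and pos: "\<And>t i. 0 \<le> t \<Longrightarrow> 0 < x t $ i"
    and eta: "0 < \<eta>" and kb: "\<And>r t. r \<in> R \<Longrightarrow> 0 \<le> t \<Longrightarrow> \<eta> < \<kappa> r t \<and> \<kappa> r t < 1 / \<eta>"
    and st: "0 \<le> s" "s \<le> t" and neg: "\<And>\<tau>. \<tau> \<in> {s..t} \<Longrightarrow> dissipation_bound \<eta> R (x \<tau>) (x \<tau>) < 0"
  shows "lyapunov (x t) \<le> lyapunov (x s)"
proof (rule local_antimono_imp_antimono[OF st(2)])
  fix c assume c: "c \<in> {s..t}"
  obtain e where e: "0 < e" "\<And>q q'. dist q (x c) < e \<Longrightarrow> dist q' (x c) < e \<Longrightarrow> dissipation_bound \<eta> R q q' < 0"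
  proof -
    have "\<forall>i. 0 < x c $ i" using pos c st by auto
    thus ?thesis using dissipation_bound_negative_near[OF _ eta neg[OF c]] that by blast
  qed
  have "continuous_on {0..} x" using sol unfolding is_solution_def by simp
  then obtain d where d: "0 < d" "\<And>\<tau>. \<tau> \<in> {0..} \<Longrightarrow> dist \<tau> c < d \<Longrightarrow> dist (x \<tau>) (x c) < e"
    using e(1) c st unfolding continuous_on_iff by (metis atLeast_iff atLeastAtMost_iff order_trans)
  show "\<exists>d>0. \<forall>u v. u \<in> {s..t} \<and> v \<in> {s..t} \<and> u \<le> c \<and> c \<le> v \<and> v - u < d \<longrightarrow> lyapunov (x v) \<le> lyapunov (x u)"
  proof (intro exI[of _ d] conjI d(1) allI impI, elim conjE)
    fix u v assume u: "u \<in> {s..t}" and v: "v \<in> {s..t}" and uc: "u \<le> c" and cv: "c \<le> v" and uv: "v - u < d"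
    have u0: "0 \<le> u" using u st by simp
    have near: "dist (x \<tau>) (x c) < e" if "\<tau> \<in> {u..v}" for \<tau>
      using d(2)[of \<tau>] that u0 uc cv uv by (auto simp: dist_real_def)
    show "lyapunov (x v) \<le> lyapunov (x u)"
      using u0 uc cv near e(2) by (intro lyapunov_step_le[OF sol pos eta kb]) auto
  qed
qed

lemma bounded_kinetics_small_eta:
  assumes "bounded_kinetics R \<kappa>"
  obtains \<eta> where "0 < \<eta>" "\<eta> < 1" "\<And>r t. r \<in> R \<Longrightarrow> 0 \<le> t \<Longrightarrow> \<eta> < \<kappa> r t \<and> \<kappa> r t < 1 / \<eta>"
proof -
  obtain \<eta>0 where eta0: "0 < \<eta>0" "\<forall>r\<in>R. \<forall>t\<ge>0. \<eta>0 < \<kappa> r t \<and> \<kappa> r t < 1 / \<eta>0"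
    using assms unfolding bounded_kinetics_def by blast
  define \<eta> where "\<eta> = min \<eta>0 (1/2)"
  have "0 < \<eta>" "\<eta> < 1" "\<eta> \<le> \<eta>0" unfolding \<eta>_def using eta0 by auto
  moreover have "1 / \<eta>0 \<le> 1 / \<eta>" using \<open>0 < \<eta>\<close> \<open>\<eta> \<le> \<eta>0\<close> by (simp add: frac_le)
  ultimately show ?thesis using eta0(2) by (intro that[of \<eta>]) force+
qed

text \<open>A positive solution whose dissipation bound is negative outside a ball (within its
  compatibility class) is bounded: \<open>V\<close> cannot increase above the level \<open>L\<close>, at which the
  state is outside the ball, so \<open>V\<close> stays below \<open>L\<close>, and bounded \<open>V\<close> means bounded state.\<close>
lemma solution_bounded_if_dissipative_far_out:
  fixes x :: "real \<Rightarrow> real^'n::finite"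
  assumes sol: "is_solution R \<kappa> x0 x" and pos: "\<And>t i. 0 \<le> t \<Longrightarrow> 0 < x t $ i"
    and eta: "0 < \<eta>" and kb: "\<And>r t. r \<in> R \<Longrightarrow> 0 \<le> t \<Longrightarrow> \<eta> < \<kappa> r t \<and> \<kappa> r t < 1 / \<eta>"
    and far_out: "\<And>p. \<forall>i. 0 < p$i \<Longrightarrow> \<forall>z. (\<forall>r\<in>R. z \<bullet> reaction_vec r = 0) \<longrightarrow> z \<bullet> (p - x0) = 0
      \<Longrightarrow> B < norm p \<Longrightarrow> dissipation_bound \<eta> R p p < 0"
  shows "\<exists>M. \<forall>t\<ge>0. norm (x t) \<le> M"
proof -
  define L where "L = max (real CARD('n) * B^2) (lyapunov x0) + 1"
  have far: "dissipation_bound \<eta> R (x \<tau>) (x \<tau>) < 0" if "0 \<le> \<tau>" "L \<le> lyapunov (x \<tau>)" for \<tau>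
  proof (rule far_out)
    show "\<forall>i. 0 < x \<tau> $ i" using pos that(1) by blast
    show "\<forall>z. (\<forall>r\<in>R. z \<bullet> reaction_vec r = 0) \<longrightarrow> z \<bullet> (x \<tau> - x0) = 0"
      using solution_conservation[OF sol that(1)] by blast
    have "real CARD('n) * B^2 < lyapunov (x \<tau>)" using that(2) unfolding L_def by linarith
    thus "B < norm (x \<tau>)" using lyapunov_upper[of "x \<tau>" B] pos that(1) by force
  qed
  have VL: "lyapunov (x t) \<le> L" if "0 \<le> t" for t
  proof (rule sublevel_invariant[OF _ _ _ that])
    show "continuous_on {0..} (\<lambda>t. lyapunov (x t))"
      using sol pos by (intro lyapunov_continuous_on) (auto simp: is_solution_def)
    show "lyapunov (x 0) \<le> L" using sol unfolding L_def is_solution_def by simp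
  next
    fix s t assume "0 \<le> s" "s \<le> t" "\<forall>\<tau>\<in>{s..t}. L \<le> lyapunov (x \<tau>)"
    thus "lyapunov (x t) \<le> lyapunov (x s)"
      using far by (intro lyapunov_nonincreasing[OF sol pos eta kb]) auto
  qed
  have "norm (x t) \<le> real CARD('n) * max (exp 2) (L + real CARD('n))" if "0 \<le> t" for t
  proof -
    have "norm (x t) \<le> real CARD('n) * max (exp 2) (lyapunov (x t) + real CARD('n))"
      using norm_le_lyapunov pos[OF that] by blast
    also have "\<dots> \<le> real CARD('n) * max (exp 2) (L + real CARD('n))"
      using VL[OF that] by (intro mult_left_mono) auto
    finally show ?thesis .
  qed
  thus ?thesis by blast
qed

theorem mainTheorem6:
  fixes C :: "'n::finite complex set" and R :: "'n reaction set"
    and \<kappa> :: "'n reaction \<Rightarrow> real \<Rightarrow> real"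
    and x0 :: "real^'n" and x :: "real \<Rightarrow> real^'n"
  assumes "crn C R"
    and "weakly_reversible C R"
    and "single_linkage_class C R"
    and "bounded_kinetics R \<kappa>"
    and "\<forall>i. x0 $ i > 0"
    and "is_solution R \<kappa> x0 x"
  shows "\<exists>B. \<forall>\<^sub>F t in at_top. norm (x t) \<le> B"
proof -
  note crn = assms(1) and x0 = assms(5) and sol = assms(6)
  obtain \<eta> where eta: "0 < \<eta>" "\<eta> < 1" and kb: "\<And>r t. r \<in> R \<Longrightarrow> 0 \<le> t \<Longrightarrow> \<eta> < \<kappa> r t \<and> \<kappa> r t < 1 / \<eta>"
    using bounded_kinetics_small_eta[OF assms(4)] by blast
  have finR: "finite R" using crn unfolding crn_def by simp
  have pos: "\<And>t i. 0 \<le> t \<Longrightarrow> 0 < x t $ i" using solution_positive[OF sol finR eta(1) kb x0] by blast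
  obtain B where "\<And>p. \<forall>i. 0 < p$i \<Longrightarrow> \<forall>z. (\<forall>r\<in>R. z \<bullet> reaction_vec r = 0) \<longrightarrow> z \<bullet> (p - x0) = 0
      \<Longrightarrow> B < norm p \<Longrightarrow> dissipation_bound \<eta> R p p < 0"
    using dissipation_bound_negative_far_out[OF crn assms(2,3) eta x0] by blast
  then obtain M where "\<forall>t\<ge>0. norm (x t) \<le> M"
    using solution_bounded_if_dissipative_far_out[OF sol pos eta(1) kb] by blast
  thus ?thesis using eventually_ge_at_top[of "0::real"] by (blast intro: eventually_mono)
qed

end
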